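(* Let $G$ be a finite simple graph on $[d]$, $k\ge1$, and let $f,g$ be $k$-colorings of $G$. Then $f\sim_k g$ if and only if ${\bf x}_f-{\bf x}_g\in\langle [I_G]_2\rangle$.
   Context: A $k$-coloring of a graph $H$ is a map $f:V(H)\to[k]$ (not necessarily surjective) with $f(u)\neq f(v)$ for every edge. A Kempe switching: for colors $i<j$ and a connected component $C$ of $H[f^{-1}(i)\cup f^{-1}(j)]$, interchange $i$ and $j$ on $C$. $f\sim_k g$ (Kempe equivalent) if $g$ is obtained from $f$ by a finite sequence of Kempe switchings. A stable set of $G$ is a subset of $[d]$ with no edge of $G$ (including $\emptyset$ and singletons); $S(G)$ is the set of stable sets; $R[G]=\mathbb{K}[x_S : S\in S(G)]$ over a field $\mathbb{K}$, all variables of degree $1$. For a $k$-coloring $f$ of an induced subgraph $G[W]$, ${\bf x}_f=\prod_{\ell=1}^k x_{f^{-1}(\ell)}$. The stable set ideal $I_G$ is the kernel of the ring map $\pi:R[G]\to\mathbb{K}[t_1,\dots,t_d,s]$, $\pi(x_S)=s\prod_{j\in S}t_j$; a binomial $x_{S_1}\cdots x_{S_r}-x_{T_1}\cdots x_{T_r}$ lies in $I_G$ iff $S_1\cup\dots\cup S_r=T_1\cup\dots\cup T_r$ as multisets. $\langle [I_G]_2\rangle$ denotes the ideal of $R[G]$ generated by the homogeneous elements of degree $2$ of $I_G$ (equivalently, by the quadratic binomials in $I_G$). *)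

theory Defs
  imports "HOL-Library.Poly_Mapping"
begin

definition simple_graph_on :: "nat \<Rightarrow> (nat \<times> nat) set \<Rightarrow> bool" where
  "simple_graph_on d E \<longleftrightarrow> E \<subseteq> {1..d} \<times> {1..d} \<and> sym E \<and> irrefl E"

text \<open>A k-coloring of G (on vertex set {1..d}); values outside the vertex set are fixed to 0
  so that a coloring is determined by its values on the vertices.\<close>
definition coloring :: "nat \<Rightarrow> (nat \<times> nat) set \<Rightarrow> nat \<Rightarrow> (nat \<Rightarrow> nat) \<Rightarrow> bool" where
  "coloring d E k f \<longleftrightarrow> (\<forall>v\<in>{1..d}. f v \<in> {1..k}) \<and> (\<forall>v. v \<notin> {1..d} \<longrightarrow> f v = 0)
      \<and> (\<forall>u v. (u, v) \<in> E \<longrightarrow> f u \<noteq> f v)"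

definition component_of :: "(nat \<times> nat) set \<Rightarrow> nat set \<Rightarrow> nat set \<Rightarrow> bool" where
  "component_of E W C \<longleftrightarrow> (\<exists>v\<in>W. C = {u. (v, u) \<in> (E \<inter> (W \<times> W))\<^sup>*})"

definition kempe_switch :: "nat \<Rightarrow> (nat \<times> nat) set \<Rightarrow> nat \<Rightarrow> (nat \<Rightarrow> nat) \<Rightarrow> (nat \<Rightarrow> nat) \<Rightarrow> bool" where
  "kempe_switch d E k f g \<longleftrightarrow> (\<exists>i j C. 1 \<le> i \<and> i < j \<and> j \<le> k \<and>
      component_of E {v\<in>{1..d}. f v = i \<or> f v = j} C \<and>
      g = (\<lambda>v. if v \<in> C then (if f v = i then j else i) else f v))"

definition kempe_equiv :: "nat \<Rightarrow> (nat \<times> nat) set \<Rightarrow> nat \<Rightarrow> (nat \<Rightarrow> nat) \<Rightarrow> (nat \<Rightarrow> nat) \<Rightarrow> bool" where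
  "kempe_equiv d E k f g \<longleftrightarrow> (kempe_switch d E k)\<^sup>*\<^sup>* f g"

definition stable_set :: "nat \<Rightarrow> (nat \<times> nat) set \<Rightarrow> nat set \<Rightarrow> bool" where
  "stable_set d E S \<longleftrightarrow> S \<subseteq> {1..d} \<and> (\<forall>u\<in>S. \<forall>v\<in>S. (u, v) \<notin> E)"

text \<open>Polynomials over 'k in variables x_S indexed by sets S (monomials = finitely supported
  exponent functions).\<close>
type_synonym 'k spoly = "(nat set \<Rightarrow>\<^sub>0 nat) \<Rightarrow>\<^sub>0 'k"

definition xvar :: "nat set \<Rightarrow> ('k::comm_ring_1) spoly" where
  "xvar S = Poly_Mapping.single (Poly_Mapping.single S 1) 1"

definition in_RG :: "nat \<Rightarrow> (nat \<times> nat) set \<Rightarrow> ('k::comm_ring_1) spoly \<Rightarrow> bool" where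
  "in_RG d E p \<longleftrightarrow> (\<forall>m\<in>Poly_Mapping.keys p. \<forall>S\<in>Poly_Mapping.keys m. stable_set d E S)"

definition xcol :: "nat set \<Rightarrow> nat \<Rightarrow> (nat \<Rightarrow> nat) \<Rightarrow> ('k::comm_ring_1) spoly" where
  "xcol W k f = (\<Prod>l\<in>{1..k}. xvar {v\<in>W. f v = l})"

text \<open>The target ring K[t_1,...,t_d,s]: variables indexed by nat, with s = variable 0 and
  t_j = variable j (1 \<le> j \<le> d).\<close>
type_synonym 'k tpoly = "(nat \<Rightarrow>\<^sub>0 nat) \<Rightarrow>\<^sub>0 'k"

definition tvar :: "nat \<Rightarrow> ('k::comm_ring_1) tpoly" where
  "tvar j = Poly_Mapping.single (Poly_Mapping.single j 1) 1"

definition pi_var :: "nat set \<Rightarrow> ('k::comm_ring_1) tpoly" where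
  "pi_var S = tvar 0 * (\<Prod>j\<in>S. tvar j)"

text \<open>The K-algebra map pi with pi(x_S) = s * prod_{j in S} t_j.\<close>
definition pi_map :: "('k::comm_ring_1) spoly \<Rightarrow> 'k tpoly" where
  "pi_map p = (\<Sum>m\<in>Poly_Mapping.keys p. Poly_Mapping.single 0 (Poly_Mapping.lookup p m) * (\<Prod>S\<in>Poly_Mapping.keys m. pi_var S ^ Poly_Mapping.lookup m S))"

definition stable_set_ideal :: "nat \<Rightarrow> (nat \<times> nat) set \<Rightarrow> ('k::comm_ring_1) spoly set" where
  "stable_set_ideal d E = {p. in_RG d E p \<and> pi_map p = 0}"

definition homogeneous_deg :: "nat \<Rightarrow> ('k::comm_ring_1) spoly \<Rightarrow> bool" where
  "homogeneous_deg n p \<longleftrightarrow> (\<forall>m\<in>Poly_Mapping.keys p. (\<Sum>S\<in>Poly_Mapping.keys m. Poly_Mapping.lookup m S) = n)"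

definition ideal_RG :: "nat \<Rightarrow> (nat \<times> nat) set \<Rightarrow> ('k::comm_ring_1) spoly set \<Rightarrow> 'k spoly set" where
  "ideal_RG d E B = {q. \<exists>F r. finite F \<and> F \<subseteq> B \<and> (\<forall>b\<in>F. in_RG d E (r b)) \<and> q = (\<Sum>b\<in>F. r b * b)}"

definition quad_ideal :: "nat \<Rightarrow> (nat \<times> nat) set \<Rightarrow> ('k::comm_ring_1) spoly set" where
  "quad_ideal d E = ideal_RG d E {p \<in> stable_set_ideal d E. homogeneous_deg 2 p}"

end

theory Submission
  imports Defs
begin

(*
  The monomial x_f of a coloring has as exponent the multiset of its k color classes. A Kempe
  switch on colors i, j replaces the classes F_i, F_j by two stable sets G_i, G_j covering the
  same vertices, so x_f - x_g is a monomial times the quadratic binomial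
  x_{F_i} x_{F_j} - x_{G_i} x_{G_j} of I_G.

  Conversely, let K be the set of monomials reachable from x_f by such exchanges of two stable
  factors. The functional summing the coefficients of the monomials in K vanishes on every
  multiple of a quadratic element of I_G, since two of its monomials with the same image under
  pi differ by an exchange; applied to x_f - x_g it puts x_g into K. An exchange starting at the
  monomial of a coloring is realised by Kempe switches, because two colorings that differ only
  inside two colors are Kempe equivalent (switch the two-colored component of a vertex where they
  differ). Finally, colorings with the same monomial differ by a permutation of the colors, which
  is a product of such recolorings.
*)

section \<open>Kempe switches\<close>

definition differ_only_in_colors :: "nat \<Rightarrow> nat \<Rightarrow> (nat \<Rightarrow> nat) \<Rightarrow> (nat \<Rightarrow> nat) \<Rightarrow> bool" where
  "differ_only_in_colors i j f g \<longleftrightarrow> (\<forall>v. f v \<noteq> g v \<longrightarrow> f v \<in> {i, j} \<and> g v \<in> {i, j})"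

definition kempe_swap :: "nat set \<Rightarrow> nat \<Rightarrow> nat \<Rightarrow> (nat \<Rightarrow> nat) \<Rightarrow> nat \<Rightarrow> nat" where
  "kempe_swap C i j f = (\<lambda>v. if v \<in> C then (if f v = i then j else i) else f v)"

lemma coloring_outside: "coloring d E k f \<Longrightarrow> v \<notin> {1..d} \<Longrightarrow> f v = 0"
  and coloring_range: "coloring d E k f \<Longrightarrow> v \<in> {1..d} \<Longrightarrow> f v \<in> {1..k}"
  and coloring_edge: "coloring d E k f \<Longrightarrow> (u, v) \<in> E \<Longrightarrow> f u \<noteq> f v"
  unfolding coloring_def by blast+

lemma component_of_subset: "component_of E W C \<Longrightarrow> C \<subseteq> W"
proof -
  have "u \<in> W" if "(v, u) \<in> (E \<inter> W \<times> W)\<^sup>*" "v \<in> W" for u v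
    using that by (induction rule: rtrancl_induct) auto
  then show "component_of E W C \<Longrightarrow> C \<subseteq> W"
    unfolding component_of_def by blast
qed

lemma component_of_closed:
  assumes "component_of E W C" "u \<in> C" "(u, u') \<in> E" "u' \<in> W"
  shows "u' \<in> C"
proof -
  obtain v where C: "C = {u. (v, u) \<in> (E \<inter> W \<times> W)\<^sup>*}"
    using assms(1) unfolding component_of_def by blast
  have "(u, u') \<in> E \<inter> W \<times> W"
    using assms component_of_subset by blast
  with assms(2) show ?thesis
    unfolding C by (simp add: rtrancl_into_rtrancl)
qed

lemma coloring_kempe_swap:
  assumes "sym E" and f: "coloring d E k f" and ij: "i \<in> {1..k}" "j \<in> {1..k}"
    and C: "component_of E {v \<in> {1..d}. f v = i \<or> f v = j} C"
  shows "coloring d E k (kempe_swap C i j f)"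
  unfolding coloring_def
proof (intro conjI allI impI ballI)
  let ?W = "{v \<in> {1..d}. f v = i \<or> f v = j}"
  have CW: "C \<subseteq> ?W" using component_of_subset[OF C] .
  have leave: "f v \<noteq> i \<and> f v \<noteq> j" if "u \<in> C" "v \<notin> C" "(u, v) \<in> E" for u v
  proof -
    have "v \<notin> ?W" using component_of_closed[OF C] that by blast
    then show ?thesis using coloring_outside[OF f, of v] ij by (cases "v \<in> {1..d}") auto
  qed
  show "kempe_swap C i j f v \<in> {1..k}" if "v \<in> {1..d}" for v
    using coloring_range[OF f that] ij unfolding kempe_swap_def by auto
  show "kempe_swap C i j f v = 0" if "v \<notin> {1..d}" for v
    using coloring_outside[OF f that] that CW unfolding kempe_swap_def by auto
  fix u v assume uv: "(u, v) \<in> E"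
  have vu: "(v, u) \<in> E" using \<open>sym E\<close> uv by (rule symD)
  show "kempe_swap C i j f u \<noteq> kempe_swap C i j f v"
    using coloring_edge[OF f uv] CW leave[OF _ _ uv] leave[OF _ _ vu]
    unfolding kempe_swap_def by auto
qed

lemma differ_only_in_colors_kempe_swap:
  assumes "component_of E {v \<in> {1..d}. f v = i \<or> f v = j} C"
  shows "differ_only_in_colors i j f (kempe_swap C i j f)"
  using component_of_subset[OF assms] unfolding differ_only_in_colors_def kempe_swap_def by auto

lemma kempe_switch_iff:
  "kempe_switch d E k f g \<longleftrightarrow> (\<exists>i j C. i \<noteq> j \<and> i \<in> {1..k} \<and> j \<in> {1..k} \<and>
      component_of E {v \<in> {1..d}. f v = i \<or> f v = j} C \<and> g = kempe_swap C i j f)"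
    (is "_ \<longleftrightarrow> (\<exists>i j C. ?switch i j C)")
proof
  assume "kempe_switch d E k f g"
  then obtain i j C where "1 \<le> i" "i < j" "j \<le> k"
    and "component_of E {v \<in> {1..d}. f v = i \<or> f v = j} C" "g = kempe_swap C i j f"
    unfolding kempe_switch_def kempe_swap_def by blast
  then have "?switch i j C" by auto
  then show "\<exists>i j C. ?switch i j C" by blast
next
  assume "\<exists>i j C. ?switch i j C"
  then obtain i j C where sw: "?switch i j C" by blast
  have "?switch j i C"
  proof -
    have "{v \<in> {1..d}. f v = j \<or> f v = i} = {v \<in> {1..d}. f v = i \<or> f v = j}" by blast
    moreover have "kempe_swap C i j f = kempe_swap C j i f"
      using sw component_of_subset[of E _ C] unfolding kempe_swap_def by force
    ultimately show ?thesis using sw by simp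
  qed
  moreover have "kempe_switch d E k f g" if "?switch i' j' C'" "i' < j'" for i' j' C'
    using that unfolding kempe_switch_def kempe_swap_def by auto
  ultimately show "kempe_switch d E k f g"
    using sw nat_neq_iff by blast
qed

lemma kempe_switchD:
  assumes "sym E" "coloring d E k f" "kempe_switch d E k f g"
  shows "coloring d E k g \<and> (\<exists>i j. i \<noteq> j \<and> i \<in> {1..k} \<and> j \<in> {1..k} \<and> differ_only_in_colors i j f g)"
proof -
  obtain i j C where "i \<noteq> j" "i \<in> {1..k}" "j \<in> {1..k}"
    and C: "component_of E {v \<in> {1..d}. f v = i \<or> f v = j} C" and "g = kempe_swap C i j f"
    using assms(3) unfolding kempe_switch_iff by blast
  then show ?thesis
    using coloring_kempe_swap[OF assms(1,2)] differ_only_in_colors_kempe_swap[OF C] by blast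
qed

lemma kempe_swap_component_of_difference:
  assumes f: "coloring d E k f" and g: "coloring d E k g" and fg: "differ_only_in_colors i j f g"
    and W: "W = {v \<in> {1..d}. f v = i \<or> f v = j}"
    and v0: "f v0 \<noteq> g v0" and C: "C = {u. (v0, u) \<in> (E \<inter> W \<times> W)\<^sup>*}"
  shows "kempe_swap C i j f = (\<lambda>v. if v \<in> C then g v else f v)"
proof -
  have "f u \<noteq> g u" if "(v0, u) \<in> (E \<inter> W \<times> W)\<^sup>*" for u
    using that
  proof (induction rule: rtrancl_induct)
    case base
    show ?case using v0 .
  next
    case (step y z)
    then have yz: "(y, z) \<in> E" and "f y \<in> {i, j}" "f z \<in> {i, j}" "g y \<in> {i, j}"
      using W fg unfolding differ_only_in_colors_def by auto
    moreover have "f y \<noteq> f z" "g y \<noteq> g z"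
      using coloring_edge[OF f yz] coloring_edge[OF g yz] .
    ultimately show ?case using step.IH by auto
  qed
  then show ?thesis
    using fg unfolding C kempe_swap_def differ_only_in_colors_def by fastforce
qed

lemma kempe_equiv_if_differ_only_in_colors:
  assumes "sym E" and g: "coloring d E k g" and ij: "i \<noteq> j" "i \<in> {1..k}" "j \<in> {1..k}"
  shows "coloring d E k f \<Longrightarrow> differ_only_in_colors i j f g \<Longrightarrow> kempe_equiv d E k f g"
proof (induction "card {v. f v \<noteq> g v}" arbitrary: f rule: less_induct)
  case less
  note f = less.prems(1) and fg = less.prems(2)
  have diff_vertices: "{v. f v \<noteq> g v} \<subseteq> {1..d}"
    using coloring_outside[OF f] coloring_outside[OF g] by fastforce
  show ?case
  proof (cases "f = g")
    case True
    then show ?thesis by (simp add: kempe_equiv_def)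
  next
    case False
    then obtain v0 where v0: "f v0 \<noteq> g v0" by auto
    define W where "W = {v \<in> {1..d}. f v = i \<or> f v = j}"
    define C where "C = {u. (v0, u) \<in> (E \<inter> W \<times> W)\<^sup>*}"
    have "v0 \<in> W"
      using v0 diff_vertices fg unfolding W_def differ_only_in_colors_def by auto
    then have C: "component_of E W C"
      unfolding component_of_def C_def by blast
    have swap: "kempe_swap C i j f = (\<lambda>v. if v \<in> C then g v else f v)"
      using kempe_swap_component_of_difference[OF f g fg W_def v0 C_def] .
    have "kempe_switch d E k f (kempe_swap C i j f)"
      using ij C unfolding kempe_switch_iff W_def by blast
    moreover have "kempe_equiv d E k (kempe_swap C i j f) g"
    proof (rule less.hyps)
      have "v0 \<in> C" unfolding C_def by simp
      then have "{v. kempe_swap C i j f v \<noteq> g v} \<subset> {v. f v \<noteq> g v}"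
        using v0 unfolding swap by auto
      then show "card {v. kempe_swap C i j f v \<noteq> g v} < card {v. f v \<noteq> g v}"
        using diff_vertices by (meson finite_atLeastAtMost finite_subset psubset_card_mono)
      show "coloring d E k (kempe_swap C i j f)"
        using coloring_kempe_swap[OF \<open>sym E\<close> f] ij C unfolding W_def by blast
      show "differ_only_in_colors i j (kempe_swap C i j f) g"
        using fg unfolding swap differ_only_in_colors_def by auto
    qed
    ultimately show ?thesis
      unfolding kempe_equiv_def by (rule converse_rtranclp_into_rtranclp)
  qed
qed

section \<open>Color classes and the monomial of a coloring\<close>

definition color_class :: "nat \<Rightarrow> (nat \<Rightarrow> nat) \<Rightarrow> nat \<Rightarrow> nat set" where
  "color_class d f l = {v \<in> {1..d}. f v = l}"

definition color_monomial :: "nat \<Rightarrow> nat \<Rightarrow> (nat \<Rightarrow> nat) \<Rightarrow> (nat set \<Rightarrow>\<^sub>0 nat)" where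
  "color_monomial d k f = (\<Sum>l\<in>{1..k}. Poly_Mapping.single (color_class d f l) 1)"

lemma prod_single_one:
  "(\<Prod>x\<in>A. Poly_Mapping.single (h x :: 'a::comm_monoid_add) (1::'b::comm_semiring_1))
     = Poly_Mapping.single (\<Sum>x\<in>A. h x) 1"
  by (induction A rule: infinite_finite_induct) (simp_all add: mult_single)

lemma xcol_eq_single: "xcol {1..d} k f = Poly_Mapping.single (color_monomial d k f) 1"
  unfolding xcol_def xvar_def color_monomial_def color_class_def by (rule prod_single_one)

lemma lookup_color_monomial:
  "Poly_Mapping.lookup (color_monomial d k f) X = card {l \<in> {1..k}. color_class d f l = X}"
  unfolding color_monomial_def lookup_sum lookup_single
  by (simp add: when_def sum.If_cases Int_def)

lemma stable_color_class: "coloring d E k f \<Longrightarrow> stable_set d E (color_class d f l)"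
  unfolding stable_set_def color_class_def using coloring_edge by fastforce

lemma color_class_eq_if_differ_only_in_colors:
  "differ_only_in_colors i j f g \<Longrightarrow> l \<notin> {i, j} \<Longrightarrow> color_class d g l = color_class d f l"
  unfolding differ_only_in_colors_def color_class_def by (metis insertCI)

lemma color_monomial_split:
  assumes "i \<noteq> j" "i \<in> {1..k}" "j \<in> {1..k}"
  shows "color_monomial d k f = Poly_Mapping.single (color_class d f i) 1
     + Poly_Mapping.single (color_class d f j) 1
     + (\<Sum>l\<in>{1..k} - {i, j}. Poly_Mapping.single (color_class d f l) 1)"
proof -
  let ?x = "\<lambda>l. Poly_Mapping.single (color_class d f l) (1::nat)"
  have "sum ?x {1..k} = ?x i + sum ?x ({1..k} - {i})"
    using assms by (simp add: sum.remove)
  also have "sum ?x ({1..k} - {i}) = ?x j + sum ?x ({1..k} - {i} - {j})"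
    using assms by (intro sum.remove) auto
  also have "{1..k} - {i} - {j} = {1..k} - {i, j}" by blast
  finally show ?thesis unfolding color_monomial_def by (simp add: add.assoc)
qed

lemma color_monomial_split_recolor:
  assumes "differ_only_in_colors i j f g" "i \<noteq> j" "i \<in> {1..k}" "j \<in> {1..k}"
  shows "color_monomial d k g = Poly_Mapping.single (color_class d g i) 1
     + Poly_Mapping.single (color_class d g j) 1
     + (\<Sum>l\<in>{1..k} - {i, j}. Poly_Mapping.single (color_class d f l) 1)"
  unfolding color_monomial_split[OF assms(2-4)]
  using color_class_eq_if_differ_only_in_colors[OF assms(1)] by (auto intro!: sum.cong)

definition swap_colors :: "nat \<Rightarrow> nat \<Rightarrow> (nat \<Rightarrow> nat) \<Rightarrow> nat \<Rightarrow> nat" where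
  "swap_colors l m f = (\<lambda>v. if f v = l then m else if f v = m then l else f v)"

lemma coloring_swap_colors:
  assumes f: "coloring d E k f" and "l \<in> {1..k}" "m \<in> {1..k}"
  shows "coloring d E k (swap_colors l m f)"
  unfolding coloring_def
proof (intro conjI allI impI ballI)
  show "swap_colors l m f v \<in> {1..k}" if "v \<in> {1..d}" for v
    using assms coloring_range[OF f that] unfolding swap_colors_def by auto
  show "swap_colors l m f v = 0" if "v \<notin> {1..d}" for v
    using assms coloring_outside[OF f that] unfolding swap_colors_def by auto
  show "swap_colors l m f u \<noteq> swap_colors l m f v" if "(u, v) \<in> E" for u v
    using coloring_edge[OF f that] unfolding swap_colors_def by auto
qed

lemma differ_only_in_colors_swap_colors: "differ_only_in_colors l m f (swap_colors l m f)"
  unfolding differ_only_in_colors_def swap_colors_def by auto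

lemma color_class_swap_colors:
  assumes "l \<noteq> m"
  shows "color_class d (swap_colors l m f) l = color_class d f m"
    and "color_class d (swap_colors l m f) m = color_class d f l"
  using assms unfolding color_class_def swap_colors_def by auto

lemma color_monomial_swap_colors:
  assumes "l \<noteq> m" "l \<in> {1..k}" "m \<in> {1..k}"
  shows "color_monomial d k (swap_colors l m f) = color_monomial d k f"
  using color_monomial_split_recolor[OF differ_only_in_colors_swap_colors assms]
    color_monomial_split[OF assms, of d f] color_class_swap_colors[OF assms(1)]
  by (simp add: add_ac)

lemma swap_colors_mismatch_subset:
  assumes "l \<noteq> m" "color_class d f m = color_class d g l" "color_class d g m \<noteq> color_class d g l"
  shows "{p \<in> P. color_class d (swap_colors l m f) p \<noteq> color_class d g p}
    \<subseteq> {p \<in> P. color_class d f p \<noteq> color_class d g p} - {l}"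
proof
  fix p assume p: "p \<in> {p \<in> P. color_class d (swap_colors l m f) p \<noteq> color_class d g p}"
  consider "p = l" | "p = m" | "p \<notin> {l, m}" by blast
  then show "p \<in> {p \<in> P. color_class d f p \<noteq> color_class d g p} - {l}"
  proof cases
    case 1
    then show ?thesis using p assms(2) color_class_swap_colors(1)[OF assms(1)] by simp
  next
    case 2
    then show ?thesis using p assms by simp
  next
    case 3
    then show ?thesis
      using p color_class_eq_if_differ_only_in_colors[OF differ_only_in_colors_swap_colors] by auto
  qed
qed

lemma coloring_eq_if_color_classes_eq:
  assumes f: "coloring d E k f" and g: "coloring d E k g"
    and classes: "\<forall>l\<in>{1..k}. color_class d f l = color_class d g l"
  shows "f = g"
proof
  fix v
  show "f v = g v"
  proof (cases "v \<in> {1..d}")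
    case True
    then have "v \<in> color_class d f (f v)" "f v \<in> {1..k}"
      using coloring_range[OF f] unfolding color_class_def by auto
    then have "v \<in> color_class d g (f v)" using classes by blast
    then show ?thesis unfolding color_class_def by simp
  qed (simp add: coloring_outside[OF f] coloring_outside[OF g])
qed

lemma card_fiber_eq_obtain_mismatch:
  assumes "finite P" and cards: "card {p \<in> P. a p = x} = card {p \<in> P. b p = x}"
    and "l \<in> P" "b l = x" "a l \<noteq> x"
  obtains m where "m \<in> P" "a m = x" "b m \<noteq> x"
proof -
  have "\<not> {p \<in> P. a p = x} \<subseteq> {p \<in> P. b p = x} - {l}"
  proof
    assume "{p \<in> P. a p = x} \<subseteq> {p \<in> P. b p = x} - {l}"
    then have "card {p \<in> P. a p = x} \<le> card ({p \<in> P. b p = x} - {l})"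
      using \<open>finite P\<close> by (intro card_mono) auto
    also have "\<dots> < card {p \<in> P. b p = x}"
      using assms by (intro card_Diff1_less) auto
    finally show False using cards by simp
  qed
  then show thesis using that assms(5) by blast
qed

lemma kempe_equiv_if_same_color_monomial:
  assumes "sym E" and g: "coloring d E k g"
  shows "coloring d E k f \<Longrightarrow> color_monomial d k f = color_monomial d k g \<Longrightarrow> kempe_equiv d E k f g"
proof (induction "card {l \<in> {1..k}. color_class d f l \<noteq> color_class d g l}" arbitrary: f
    rule: less_induct)
  case less
  note f = less.prems(1) and same = less.prems(2)
  let ?mismatch = "\<lambda>f. {l \<in> {1..k}. color_class d f l \<noteq> color_class d g l}"
  show ?case
  proof (cases "?mismatch f = {}")
    case True
    then have "f = g" using coloring_eq_if_color_classes_eq[OF f g] by blast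
    then show ?thesis by (simp add: kempe_equiv_def)
  next
    case False
    then obtain l where l: "l \<in> {1..k}" "color_class d f l \<noteq> color_class d g l" by blast
    have cards: "card {p \<in> {1..k}. color_class d f p = color_class d g l}
        = card {p \<in> {1..k}. color_class d g p = color_class d g l}"
      using arg_cong[OF same, of "\<lambda>M. Poly_Mapping.lookup M (color_class d g l)"]
      unfolding lookup_color_monomial .
    obtain m where m: "m \<in> {1..k}" "color_class d f m = color_class d g l"
      "color_class d g m \<noteq> color_class d g l"
      using card_fiber_eq_obtain_mismatch[where a = "color_class d f" and b = "color_class d g",
          OF finite_atLeastAtMost cards l(1) refl l(2)]
      by blast
    have "l \<noteq> m" using l m by auto
    let ?f' = "swap_colors l m f"
    have f': "coloring d E k ?f'" using coloring_swap_colors[OF f l(1) m(1)] .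
    have "kempe_equiv d E k f ?f'"
      using kempe_equiv_if_differ_only_in_colors[OF \<open>sym E\<close> f' \<open>l \<noteq> m\<close> l(1) m(1) f]
        differ_only_in_colors_swap_colors by blast
    moreover have "kempe_equiv d E k ?f' g"
    proof (rule less.hyps[OF _ f'])
      have "?mismatch ?f' \<subseteq> ?mismatch f - {l}"
        using swap_colors_mismatch_subset[OF \<open>l \<noteq> m\<close> m(2,3)] .
      then have "card (?mismatch ?f') \<le> card (?mismatch f - {l})"
        by (intro card_mono) auto
      also have "\<dots> < card (?mismatch f)"
        using l by (intro card_Diff1_less) auto
      finally show "card (?mismatch ?f') < card (?mismatch f)" .
      show "color_monomial d k ?f' = color_monomial d k g"
        using color_monomial_swap_colors[OF \<open>l \<noteq> m\<close> l(1) m(1)] same by simp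
    qed
    ultimately show ?thesis unfolding kempe_equiv_def by (rule rtranclp_trans)
  qed
qed

section \<open>The map pi on monomials\<close>

definition pi_exponent_var :: "nat set \<Rightarrow> (nat \<Rightarrow>\<^sub>0 nat)" where
  "pi_exponent_var S = Poly_Mapping.single 0 1 + (\<Sum>j\<in>S. Poly_Mapping.single j 1)"

definition pi_exponent :: "(nat set \<Rightarrow>\<^sub>0 nat) \<Rightarrow> (nat \<Rightarrow>\<^sub>0 nat)" where
  "pi_exponent m = (\<Sum>S\<in>Poly_Mapping.keys m. \<Sum>_\<in>{..<Poly_Mapping.lookup m S}. pi_exponent_var S)"

lemma single_one_power:
  "Poly_Mapping.single (a::'a::comm_monoid_add) (1::'b::comm_semiring_1) ^ n
     = Poly_Mapping.single (\<Sum>_\<in>{..<n}. a) 1"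
  by (induction n) (simp_all add: mult_single add.commute)

lemma pi_var_eq_single: "pi_var S = Poly_Mapping.single (pi_exponent_var S) 1"
  unfolding pi_var_def tvar_def pi_exponent_var_def by (simp add: prod_single_one mult_single)

lemma pi_map_eq_sum:
  assumes "finite U" "Poly_Mapping.keys p \<subseteq> U"
  shows "pi_map p = (\<Sum>m\<in>U. Poly_Mapping.single (pi_exponent m) (Poly_Mapping.lookup p m))"
proof -
  have "pi_map p = (\<Sum>m\<in>Poly_Mapping.keys p.
      Poly_Mapping.single (pi_exponent m) (Poly_Mapping.lookup p m))"
    unfolding pi_map_def pi_var_eq_single single_one_power prod_single_one pi_exponent_def
    by (simp add: mult_single)
  also have "\<dots> = (\<Sum>m\<in>U. Poly_Mapping.single (pi_exponent m) (Poly_Mapping.lookup p m))"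
    using assms by (intro sum.mono_neutral_left) (auto simp: in_keys_iff)
  finally show ?thesis .
qed

lemma lookup_pi_map:
  "Poly_Mapping.lookup (pi_map p) t
     = (\<Sum>m\<in>Poly_Mapping.keys p. (Poly_Mapping.lookup p m when pi_exponent m = t))"
  unfolding pi_map_eq_sum[OF finite_keys subset_refl] lookup_sum lookup_single by simp

lemma pi_map_single: "pi_map (Poly_Mapping.single m c) = Poly_Mapping.single (pi_exponent m) c"
  by (subst pi_map_eq_sum[of "{m}"]) auto

lemma pi_map_diff: "pi_map (p - q) = pi_map p - pi_map q"
proof -
  let ?U = "Poly_Mapping.keys p \<union> Poly_Mapping.keys q"
  have "Poly_Mapping.keys (p - q) \<subseteq> ?U" by (rule keys_diff)
  then show ?thesis
    by (simp add: pi_map_eq_sum[of ?U] lookup_minus single_diff sum_subtractf)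
qed

lemma lookup_pi_exponent_var:
  "finite S \<Longrightarrow> Poly_Mapping.lookup (pi_exponent_var S) v = of_bool (v = 0) + of_bool (v \<in> S)"
  unfolding pi_exponent_var_def lookup_add lookup_sum lookup_single by (simp add: when_def)

lemma pi_exponent_var_pair_eq_iff:
  assumes "finite A" "finite B" "finite C" "finite D"
  shows "pi_exponent_var A + pi_exponent_var B = pi_exponent_var C + pi_exponent_var D \<longleftrightarrow>
    (\<forall>v. of_bool (v \<in> A) + of_bool (v \<in> B) = (of_bool (v \<in> C) + of_bool (v \<in> D) :: nat))"
  using assms by (simp add: poly_mapping_eq_iff fun_eq_iff lookup_add lookup_pi_exponent_var)

lemma keys_single_pair:
  "Poly_Mapping.keys (Poly_Mapping.single A (1::nat) + Poly_Mapping.single B 1) = {A, B}"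
  by (auto simp: in_keys_iff lookup_add lookup_single when_def split: if_splits)

lemma pi_exponent_pair:
  "pi_exponent (Poly_Mapping.single A 1 + Poly_Mapping.single B 1) = pi_exponent_var A + pi_exponent_var B"
proof (cases "A = B")
  case True
  have "Poly_Mapping.single A (1::nat) + Poly_Mapping.single A 1 = Poly_Mapping.single A 2"
    by (metis one_add_one single_add)
  then show ?thesis using True unfolding pi_exponent_def by (simp add: numeral_2_eq_2 mult_2)
next
  case False
  then show ?thesis
    unfolding pi_exponent_def keys_single_pair by (simp add: lookup_add lookup_single)
qed

lemma degree_single_pair:
  "(\<Sum>S\<in>Poly_Mapping.keys (Poly_Mapping.single A (1::nat) + Poly_Mapping.single B 1).
      Poly_Mapping.lookup (Poly_Mapping.single A 1 + Poly_Mapping.single B 1) S) = 2"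
  unfolding keys_single_pair by (cases "A = B") (simp_all add: lookup_add lookup_single)

lemma degree_two_monomial_eq_pair:
  assumes deg: "(\<Sum>S\<in>Poly_Mapping.keys m. Poly_Mapping.lookup m S) = (2::nat)"
  obtains A B where "A \<in> Poly_Mapping.keys m" "B \<in> Poly_Mapping.keys m"
    "m = Poly_Mapping.single A 1 + Poly_Mapping.single B 1"
proof -
  have outside: "Poly_Mapping.lookup m S = 0" if "S \<notin> Poly_Mapping.keys m" for S
    using that by (simp add: in_keys_iff)
  have "card (Poly_Mapping.keys m) = (\<Sum>S\<in>Poly_Mapping.keys m. 1)" by simp
  also have "\<dots> \<le> 2"
    unfolding deg[symmetric] by (intro sum_mono) (simp add: in_keys_iff)
  finally have "card (Poly_Mapping.keys m) \<le> 2" .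
  moreover have "card (Poly_Mapping.keys m) \<noteq> 0" using deg by auto
  ultimately consider "card (Poly_Mapping.keys m) = 1" | "card (Poly_Mapping.keys m) = 2"
    by linarith
  then show thesis
  proof cases
    case 1
    then obtain A where keys: "Poly_Mapping.keys m = {A}" by (rule card_1_singletonE)
    then have "Poly_Mapping.lookup m A = 2" using deg by simp
    then have "m = Poly_Mapping.single A 1 + Poly_Mapping.single A 1"
      using keys outside by (auto intro!: poly_mapping_eqI simp: lookup_add lookup_single when_def)
    then show thesis using that keys by blast
  next
    case 2
    then obtain A B where keys: "Poly_Mapping.keys m = {A, B}" "A \<noteq> B" by (meson card_2_iff)
    have "A \<in> Poly_Mapping.keys m" "B \<in> Poly_Mapping.keys m" using keys by auto
    then have "Poly_Mapping.lookup m A \<noteq> 0" "Poly_Mapping.lookup m B \<noteq> 0"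
      unfolding in_keys_iff .
    moreover have "Poly_Mapping.lookup m A + Poly_Mapping.lookup m B = 2" using deg keys by simp
    ultimately have "Poly_Mapping.lookup m A = 1" "Poly_Mapping.lookup m B = 1" by auto
    then have "m = Poly_Mapping.single A 1 + Poly_Mapping.single B 1"
      using keys outside by (auto intro!: poly_mapping_eqI simp: lookup_add lookup_single when_def)
    then show thesis using that keys by blast
  qed
qed

section \<open>Kempe equivalent colorings are congruent modulo the quadratic part\<close>

lemma in_RG_add: "in_RG d E p \<Longrightarrow> in_RG d E q \<Longrightarrow> in_RG d E (p + q)"
  unfolding in_RG_def using keys_add[of p q] by blast

lemma in_RG_zero: "in_RG d E 0"
  unfolding in_RG_def by simp

lemma zero_in_ideal_RG: "0 \<in> ideal_RG d E B"
  unfolding ideal_RG_def by (rule CollectI, rule exI[of _ "{}"]) simp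

lemma ideal_RG_add:
  assumes "p \<in> ideal_RG d E B" "q \<in> ideal_RG d E B"
  shows "p + q \<in> ideal_RG d E B"
proof -
  obtain F1 r1 where F1: "finite F1" "F1 \<subseteq> B" "\<forall>b\<in>F1. in_RG d E (r1 b)" "p = (\<Sum>b\<in>F1. r1 b * b)"
    using assms(1) unfolding ideal_RG_def by blast
  obtain F2 r2 where F2: "finite F2" "F2 \<subseteq> B" "\<forall>b\<in>F2. in_RG d E (r2 b)" "q = (\<Sum>b\<in>F2. r2 b * b)"
    using assms(2) unfolding ideal_RG_def by blast
  let ?F = "F1 \<union> F2"
  have extend: "(\<Sum>b\<in>F. r b * b) = (\<Sum>b\<in>?F. (if b \<in> F then r b else 0) * b)"
    if "F \<subseteq> ?F" for F and r :: "'a spoly \<Rightarrow> 'a spoly"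
  proof -
    have "(\<Sum>b\<in>?F. (if b \<in> F then r b else 0) * b) = (\<Sum>b\<in>?F. if b \<in> F then r b * b else 0)"
      by (rule sum.cong) auto
    also have "\<dots> = (\<Sum>b\<in>?F \<inter> F. r b * b)"
      using F1(1) F2(1) by (simp add: sum.inter_restrict)
    also have "?F \<inter> F = F" using that by blast
    finally show ?thesis by simp
  qed
  define r where "r b = (if b \<in> F1 then r1 b else 0) + (if b \<in> F2 then r2 b else 0)" for b
  have "p + q = (\<Sum>b\<in>?F. r b * b)"
    unfolding F1(4) F2(4) extend[of F1 r1, OF Un_upper1] extend[of F2 r2, OF Un_upper2] r_def
    by (simp add: sum.distrib distrib_right)
  moreover have "\<forall>b\<in>?F. in_RG d E (r b)"
    using F1(3) F2(3) unfolding r_def by (intro ballI in_RG_add) (simp_all add: in_RG_zero)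
  ultimately show ?thesis
    unfolding ideal_RG_def using F1(1,2) F2(1,2) by blast
qed

lemma stable_set_finite: "stable_set d E S \<Longrightarrow> finite S"
  unfolding stable_set_def using finite_subset by blast

lemma exchange_binomial_in_quad_generators:
  assumes stable: "stable_set d E A" "stable_set d E B" "stable_set d E C" "stable_set d E D"
    and exchange: "\<forall>v. of_bool (v \<in> A) + of_bool (v \<in> B) = (of_bool (v \<in> C) + of_bool (v \<in> D) :: nat)"
  shows "Poly_Mapping.single (Poly_Mapping.single A 1 + Poly_Mapping.single B 1) 1
       - Poly_Mapping.single (Poly_Mapping.single C 1 + Poly_Mapping.single D 1) (1::'k::comm_ring_1)
     \<in> {p \<in> stable_set_ideal d E. homogeneous_deg 2 p}"
proof -
  define m1 where "m1 = Poly_Mapping.single A (1::nat) + Poly_Mapping.single B 1"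
  define m2 where "m2 = Poly_Mapping.single C (1::nat) + Poly_Mapping.single D 1"
  define b where "b = Poly_Mapping.single m1 1 - Poly_Mapping.single m2 (1::'k)"
  have keys_b: "Poly_Mapping.keys b \<subseteq> {m1, m2}"
    unfolding b_def
    using keys_diff[of "Poly_Mapping.single m1 (1::'k)" "Poly_Mapping.single m2 1"] by auto
  have "Poly_Mapping.keys m1 = {A, B}" "Poly_Mapping.keys m2 = {C, D}"
    unfolding m1_def m2_def by (rule keys_single_pair)+
  then have "in_RG d E b"
    using keys_b stable unfolding in_RG_def by auto
  moreover have "pi_map b = 0"
  proof -
    have "pi_exponent m1 = pi_exponent m2"
      unfolding m1_def m2_def pi_exponent_pair
      using pi_exponent_var_pair_eq_iff[OF stable[THEN stable_set_finite]] exchange by simp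
    then show ?thesis unfolding b_def pi_map_diff pi_map_single by simp
  qed
  moreover have "homogeneous_deg 2 b"
    unfolding homogeneous_deg_def
  proof
    fix m assume "m \<in> Poly_Mapping.keys b"
    then consider "m = m1" | "m = m2" using keys_b by blast
    then show "(\<Sum>S\<in>Poly_Mapping.keys m. Poly_Mapping.lookup m S) = 2"
      by cases (simp_all only: m1_def m2_def degree_single_pair)
  qed
  ultimately show ?thesis
    unfolding stable_set_ideal_def b_def m1_def m2_def by simp
qed

lemma monomial_times_exchange_binomial_in_quad_ideal:
  assumes stable: "stable_set d E A" "stable_set d E B" "stable_set d E C" "stable_set d E D"
    and exchange: "\<forall>v. of_bool (v \<in> A) + of_bool (v \<in> B) = (of_bool (v \<in> C) + of_bool (v \<in> D) :: nat)"
    and w: "\<forall>S\<in>Poly_Mapping.keys w. stable_set d E S"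
  shows "Poly_Mapping.single (w + Poly_Mapping.single A 1 + Poly_Mapping.single B 1) 1
       - Poly_Mapping.single (w + Poly_Mapping.single C 1 + Poly_Mapping.single D 1) (1::'k::comm_ring_1)
     \<in> quad_ideal d E"
proof -
  let ?b = "Poly_Mapping.single (Poly_Mapping.single A 1 + Poly_Mapping.single B 1) 1
       - Poly_Mapping.single (Poly_Mapping.single C 1 + Poly_Mapping.single D 1) (1::'k)"
  have "in_RG d E (Poly_Mapping.single w (1::'k))"
    using w unfolding in_RG_def by simp
  moreover have "Poly_Mapping.single w 1 * ?b
      = Poly_Mapping.single (w + Poly_Mapping.single A 1 + Poly_Mapping.single B 1) 1
        - Poly_Mapping.single (w + Poly_Mapping.single C 1 + Poly_Mapping.single D 1) 1"
    by (simp add: right_diff_distrib mult_single add.assoc)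
  ultimately show ?thesis
    unfolding quad_ideal_def ideal_RG_def
    using exchange_binomial_in_quad_generators[OF stable exchange]
    by (intro CollectI exI[of _ "{?b}"] exI[of _ "\<lambda>_. Poly_Mapping.single w 1"]) simp
qed

lemma color_classes_exchange:
  assumes "differ_only_in_colors i j f g" "i \<noteq> j"
  shows "of_bool (v \<in> color_class d f i) + of_bool (v \<in> color_class d f j)
    = (of_bool (v \<in> color_class d g i) + of_bool (v \<in> color_class d g j) :: nat)"
  using assms(1)[unfolded differ_only_in_colors_def, rule_format, of v] assms(2)
  unfolding color_class_def by auto

lemma quad_ideal_if_differ_only_in_colors:
  assumes f: "coloring d E k f" and g: "coloring d E k g"
    and fg: "differ_only_in_colors i j f g" and ij: "i \<noteq> j" "i \<in> {1..k}" "j \<in> {1..k}"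
  shows "Poly_Mapping.single (color_monomial d k f) 1 - Poly_Mapping.single (color_monomial d k g) 1
    \<in> (quad_ideal d E :: 'k::comm_ring_1 spoly set)"
proof -
  define R where "R = (\<Sum>l\<in>{1..k} - {i, j}. Poly_Mapping.single (color_class d f l) (1::nat))"
  have "Poly_Mapping.keys R \<subseteq> (\<Union>l\<in>{1..k} - {i, j}. {color_class d f l})"
    unfolding R_def using keys_sum by fastforce
  then have "\<forall>S\<in>Poly_Mapping.keys R. stable_set d E S"
    using stable_color_class[OF f] by blast
  moreover have "\<forall>v. of_bool (v \<in> color_class d f i) + of_bool (v \<in> color_class d f j)
    = (of_bool (v \<in> color_class d g i) + of_bool (v \<in> color_class d g j) :: nat)"
    using color_classes_exchange[OF fg ij(1)] by blast
  ultimately have "Poly_Mapping.single (R + Poly_Mapping.single (color_class d f i) 1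
        + Poly_Mapping.single (color_class d f j) 1) 1
      - Poly_Mapping.single (R + Poly_Mapping.single (color_class d g i) 1
        + Poly_Mapping.single (color_class d g j) 1) 1 \<in> (quad_ideal d E :: 'k spoly set)"
    by (intro monomial_times_exchange_binomial_in_quad_ideal stable_color_class[OF f] stable_color_class[OF g])
  moreover have "color_monomial d k f = R + Poly_Mapping.single (color_class d f i) 1
      + Poly_Mapping.single (color_class d f j) 1"
    using color_monomial_split[OF ij, of d f] unfolding R_def by (simp add: add_ac)
  moreover have "color_monomial d k g = R + Poly_Mapping.single (color_class d g i) 1
      + Poly_Mapping.single (color_class d g j) 1"
    using color_monomial_split_recolor[OF fg ij] unfolding R_def by (simp add: add_ac)
  ultimately show ?thesis by simp
qed

lemma quad_ideal_if_kempe_equiv: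
  assumes "sym E" and f: "coloring d E k f" and "kempe_equiv d E k f g"
  shows "coloring d E k g \<and> Poly_Mapping.single (color_monomial d k f) 1
    - Poly_Mapping.single (color_monomial d k g) 1 \<in> (quad_ideal d E :: 'k::comm_ring_1 spoly set)"
  using \<open>kempe_equiv d E k f g\<close> unfolding kempe_equiv_def
proof (induction rule: rtranclp_induct)
  case base
  show ?case using f zero_in_ideal_RG unfolding quad_ideal_def by simp
next
  case (step h g)
  then have h: "coloring d E k h" by simp
  obtain i j where g: "coloring d E k g" and ij: "i \<noteq> j" "i \<in> {1..k}" "j \<in> {1..k}"
    and "differ_only_in_colors i j h g"
    using kempe_switchD[OF \<open>sym E\<close> h step.hyps(2)] by blast
  then have "Poly_Mapping.single (color_monomial d k h) 1 - Poly_Mapping.single (color_monomial d k g) 1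
      \<in> (quad_ideal d E :: 'k spoly set)"
    using quad_ideal_if_differ_only_in_colors[OF h g] by blast
  with step.IH have "(Poly_Mapping.single (color_monomial d k f) 1 - Poly_Mapping.single (color_monomial d k h) 1)
      + (Poly_Mapping.single (color_monomial d k h) 1 - Poly_Mapping.single (color_monomial d k g) 1)
      \<in> (quad_ideal d E :: 'k spoly set)"
    unfolding quad_ideal_def using ideal_RG_add by blast
  then show ?case using g by simp
qed

section \<open>Congruent colorings are Kempe equivalent\<close>

(* The moves between the two monomials of a quadratic binomial x_A x_B - x_C x_D of I_G,
   applied inside a larger monomial. *)
definition stable_exchange :: "nat \<Rightarrow> (nat \<times> nat) set \<Rightarrow> (nat set \<Rightarrow>\<^sub>0 nat) \<Rightarrow> (nat set \<Rightarrow>\<^sub>0 nat) \<Rightarrow> bool" where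
  "stable_exchange d E M M' \<longleftrightarrow> (\<exists>w A B C D.
     stable_set d E A \<and> stable_set d E B \<and> stable_set d E C \<and> stable_set d E D \<and>
     (\<forall>v. of_bool (v \<in> A) + of_bool (v \<in> B) = (of_bool (v \<in> C) + of_bool (v \<in> D) :: nat)) \<and>
     M = w + Poly_Mapping.single A 1 + Poly_Mapping.single B 1 \<and>
     M' = w + Poly_Mapping.single C 1 + Poly_Mapping.single D 1)"

lemma coloring_eq_iff_mem_color_class:
  "coloring d E k f \<Longrightarrow> i \<in> {1..k} \<Longrightarrow> f v = i \<longleftrightarrow> v \<in> color_class d f i"
  unfolding color_class_def using coloring_outside by fastforce

lemma color_monomial_obtain_pair:
  assumes "color_monomial d k f = w + Poly_Mapping.single A 1 + Poly_Mapping.single B 1"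
  obtains i j where "i \<noteq> j" "i \<in> {1..k}" "j \<in> {1..k}"
    "color_class d f i = A" "color_class d f j = B"
proof -
  let ?colors = "\<lambda>X. {l \<in> {1..k}. color_class d f l = X}"
  have card: "card (?colors X) = Poly_Mapping.lookup w X + of_bool (A = X) + of_bool (B = X)" for X
    using arg_cong[OF assms, of "\<lambda>M. Poly_Mapping.lookup M X"]
    unfolding lookup_color_monomial by (simp add: lookup_add lookup_single when_def)
  have "card (?colors A) \<noteq> 0" using card[of A] by simp
  then obtain i where i: "i \<in> ?colors A" by (metis card.empty ex_in_conv)
  have "card (?colors B - {i}) \<noteq> 0"
  proof (cases "A = B")
    case True
    then have "card (?colors B) \<ge> 2" using card[of B] by simp
    then show ?thesis using i True by (simp add: card_Diff_singleton_if)
  next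
    case False
    then have "card (?colors B) \<noteq> 0" "i \<notin> ?colors B" using card[of B] i by simp_all
    then show ?thesis by (simp add: card_Diff_singleton_if)
  qed
  then obtain j where "j \<in> ?colors B - {i}" by (metis card.empty ex_in_conv)
  then show thesis using that[of i j] i by simp
qed

lemma recolor_along_exchange:
  assumes f: "coloring d E k f" and ij: "i \<noteq> j" "i \<in> {1..k}" "j \<in> {1..k}"
    and AB: "color_class d f i = A" "color_class d f j = B"
    and CD: "stable_set d E C" "stable_set d E D"
    and exchange: "\<forall>v. of_bool (v \<in> A) + of_bool (v \<in> B) = (of_bool (v \<in> C) + of_bool (v \<in> D) :: nat)"
  defines "f' \<equiv> \<lambda>v. if v \<in> C then i else if v \<in> D then j else f v"
  shows "coloring d E k f'" "differ_only_in_colors i j f f'"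
    "color_class d f' i = C" "color_class d f' j = D"
proof -
  have fA: "f v = i \<longleftrightarrow> v \<in> A" and fB: "f v = j \<longleftrightarrow> v \<in> B" for v
    using coloring_eq_iff_mem_color_class[OF f] ij AB by auto
  have cover: "v \<in> C \<or> v \<in> D \<longleftrightarrow> v \<in> A \<or> v \<in> B" and disjoint: "\<not> (v \<in> C \<and> v \<in> D)" for v
    using exchange[rule_format, of v] fA[of v] fB[of v] ij(1) by (auto simp: of_bool_def split: if_splits)
  have CD_vertices: "C \<subseteq> {1..d}" "D \<subseteq> {1..d}"
    using CD unfolding stable_set_def by auto
  show "coloring d E k f'"
    unfolding coloring_def
  proof (intro conjI allI impI ballI)
    show "f' v \<in> {1..k}" if "v \<in> {1..d}" for v
      using coloring_range[OF f that] ij unfolding f'_def by auto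
    show "f' v = 0" if "v \<notin> {1..d}" for v
      using coloring_outside[OF f that] that CD_vertices unfolding f'_def by auto
    fix u v assume uv: "(u, v) \<in> E"
    have "\<not> (u \<in> C \<and> v \<in> C)" "\<not> (u \<in> D \<and> v \<in> D)"
      using CD uv unfolding stable_set_def by auto
    then show "f' u \<noteq> f' v"
      using coloring_edge[OF f uv] cover[of u] cover[of v] fA fB ij(1) unfolding f'_def by auto
  qed
  show "differ_only_in_colors i j f f'"
    using cover fA fB unfolding differ_only_in_colors_def f'_def by auto
  show "color_class d f' i = C" "color_class d f' j = D"
    using cover disjoint fA fB ij(1) CD_vertices unfolding color_class_def f'_def by auto
qed

lemma stable_exchange_by_kempe:
  assumes "sym E" and f: "coloring d E k f" and "stable_exchange d E (color_monomial d k f) M'"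
  obtains f' where "coloring d E k f'" "kempe_equiv d E k f f'" "color_monomial d k f' = M'"
proof -
  obtain w A B C D where CD: "stable_set d E C" "stable_set d E D"
    and exchange: "\<forall>v. of_bool (v \<in> A) + of_bool (v \<in> B) = (of_bool (v \<in> C) + of_bool (v \<in> D) :: nat)"
    and M: "color_monomial d k f = w + Poly_Mapping.single A 1 + Poly_Mapping.single B 1"
    and M': "M' = w + Poly_Mapping.single C 1 + Poly_Mapping.single D 1"
    using assms(3) unfolding stable_exchange_def by blast
  obtain i j where ij: "i \<noteq> j" "i \<in> {1..k}" "j \<in> {1..k}"
    and AB: "color_class d f i = A" "color_class d f j = B"
    using color_monomial_obtain_pair[OF M] by blast
  define f' where "f' = (\<lambda>v. if v \<in> C then i else if v \<in> D then j else f v)"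
  note f' = recolor_along_exchange[OF f ij AB CD exchange, folded f'_def]
  define R where "R = (\<Sum>l\<in>{1..k} - {i, j}. Poly_Mapping.single (color_class d f l) (1::nat))"
  have "Poly_Mapping.single A 1 + Poly_Mapping.single B 1 + R
      = Poly_Mapping.single A 1 + Poly_Mapping.single B 1 + w"
    using M color_monomial_split[OF ij, of d f] unfolding AB R_def by (simp add: add_ac)
  then have "R = w" by (rule add_left_imp_eq)
  then have "color_monomial d k f' = M'"
    using color_monomial_split_recolor[OF f'(2) ij, of d] f'(3,4) unfolding M' R_def
    by (simp add: add_ac)
  moreover have "kempe_equiv d E k f f'"
    using kempe_equiv_if_differ_only_in_colors[OF \<open>sym E\<close> f'(1) ij f f'(2)] .
  ultimately show thesis using that f'(1) by blast
qed

lemma stable_exchanges_by_kempe: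
  assumes "sym E" and f: "coloring d E k f" and "(stable_exchange d E)\<^sup>*\<^sup>* (color_monomial d k f) M"
  shows "\<exists>f'. coloring d E k f' \<and> kempe_equiv d E k f f' \<and> color_monomial d k f' = M"
  using assms(3)
proof (induction rule: rtranclp_induct)
  case base
  then show ?case using f by (auto simp: kempe_equiv_def)
next
  case (step M1 M2)
  then obtain f1 where f1: "coloring d E k f1" "kempe_equiv d E k f f1" "color_monomial d k f1 = M1"
    by blast
  obtain f2 where f2: "coloring d E k f2" "kempe_equiv d E k f1 f2" "color_monomial d k f2 = M2"
    using stable_exchange_by_kempe[OF \<open>sym E\<close> f1(1)] step.hyps(2) f1(3) by blast
  have "kempe_equiv d E k f f2"
    using f1(2) f2(2) unfolding kempe_equiv_def by (rule rtranclp_trans)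
  then show ?case using f2(1,3) by blast
qed

definition coeff_sum :: "'a set \<Rightarrow> ('a \<Rightarrow>\<^sub>0 'b::comm_monoid_add) \<Rightarrow> 'b" where
  "coeff_sum K p = (\<Sum>m\<in>Poly_Mapping.keys p. (Poly_Mapping.lookup p m when m \<in> K))"

lemma coeff_sum_eq_sum:
  assumes "finite U" "Poly_Mapping.keys p \<subseteq> U"
  shows "coeff_sum K p = (\<Sum>m\<in>U. (Poly_Mapping.lookup p m when m \<in> K))"
  unfolding coeff_sum_def using assms by (intro sum.mono_neutral_left) (auto simp: in_keys_iff)

lemma coeff_sum_zero: "coeff_sum K 0 = 0"
  by (simp add: coeff_sum_def)

lemma coeff_sum_add: "coeff_sum K (p + q) = coeff_sum K p + coeff_sum K q"
  using keys_add[of p q]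
  by (simp add: coeff_sum_eq_sum[of "Poly_Mapping.keys p \<union> Poly_Mapping.keys q"]
      lookup_add when_add_distrib sum.distrib)

lemma coeff_sum_diff:
  "coeff_sum K (p - q) = coeff_sum K p - coeff_sum K (q :: 'a \<Rightarrow>\<^sub>0 'b::ab_group_add)"
  using keys_diff[of p q]
  by (simp add: coeff_sum_eq_sum[of "Poly_Mapping.keys p \<union> Poly_Mapping.keys q"]
      lookup_minus when_diff_distrib sum_subtractf)

lemma coeff_sum_sum: "coeff_sum K (\<Sum>x\<in>F. q x) = (\<Sum>x\<in>F. coeff_sum K (q x))"
  by (induction F rule: infinite_finite_induct) (simp_all add: coeff_sum_zero coeff_sum_add)

lemma coeff_sum_single: "coeff_sum K (Poly_Mapping.single m c) = (c when m \<in> K)"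
  by (subst coeff_sum_eq_sum[of "{m}"]) auto

lemma poly_mapping_sum_single:
  "p = (\<Sum>m\<in>Poly_Mapping.keys p. Poly_Mapping.single m (Poly_Mapping.lookup p m))"
  by (rule poly_mapping_eqI) (simp add: lookup_sum lookup_single when_def in_keys_iff)

lemma coeff_sum_mult_kernel_eq_zero:
  fixes b r :: "'k::comm_ring_1 spoly"
  assumes "pi_map b = 0"
    and closed: "\<And>w m0 m. m0 \<in> Poly_Mapping.keys b \<Longrightarrow> m \<in> Poly_Mapping.keys b \<Longrightarrow>
      pi_exponent m0 = pi_exponent m \<Longrightarrow> w + m0 \<in> K \<Longrightarrow> w + m \<in> K"
  shows "coeff_sum K (r * b) = 0"
proof -
  txt \<open>The monomials of b with a common image under pi are all shifted into K or all out of it,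
    and their coefficients add up to a coefficient of pi b = 0.\<close>
  have fiber_sums: "(\<Sum>m\<in>Poly_Mapping.keys b. (Poly_Mapping.lookup b m when w + m \<in> K)) = 0" for w
  proof -
    let ?S = "{m \<in> Poly_Mapping.keys b. w + m \<in> K}"
    have "(\<Sum>m\<in>Poly_Mapping.keys b. (Poly_Mapping.lookup b m when w + m \<in> K))
        = sum (Poly_Mapping.lookup b) ?S"
      by (simp add: when_def sum.inter_filter)
    also have "\<dots> = (\<Sum>t\<in>pi_exponent ` ?S. sum (Poly_Mapping.lookup b) {m \<in> ?S. pi_exponent m = t})"
      by (rule sum.image_gen) simp
    also have "\<dots> = 0"
    proof (rule sum.neutral, rule ballI)
      fix t assume "t \<in> pi_exponent ` ?S"
      then obtain m0 where m0: "m0 \<in> Poly_Mapping.keys b" "w + m0 \<in> K" "pi_exponent m0 = t"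
        by auto
      then have "{m \<in> ?S. pi_exponent m = t} = {m \<in> Poly_Mapping.keys b. pi_exponent m = t}"
        using closed by blast
      then have "sum (Poly_Mapping.lookup b) {m \<in> ?S. pi_exponent m = t}
          = Poly_Mapping.lookup (pi_map b) t"
        unfolding lookup_pi_map by (simp add: when_def sum.inter_filter)
      then show "sum (Poly_Mapping.lookup b) {m \<in> ?S. pi_exponent m = t} = 0"
        using \<open>pi_map b = 0\<close> by simp
    qed
    finally show ?thesis .
  qed
  have "r * b = (\<Sum>w\<in>Poly_Mapping.keys r. \<Sum>m\<in>Poly_Mapping.keys b.
      Poly_Mapping.single (w + m) (Poly_Mapping.lookup r w * Poly_Mapping.lookup b m))"
    by (subst (1 2) poly_mapping_sum_single) (simp add: sum_product mult_single)
  then have "coeff_sum K (r * b) = (\<Sum>w\<in>Poly_Mapping.keys r. Poly_Mapping.lookup r w *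
      (\<Sum>m\<in>Poly_Mapping.keys b. (Poly_Mapping.lookup b m when w + m \<in> K)))"
    by (simp add: coeff_sum_sum coeff_sum_single sum_distrib_left mult_when)
  also have "\<dots> = 0" by (simp add: fiber_sums)
  finally show ?thesis .
qed

lemma stable_exchange_in_quadratic_kernel:
  assumes b: "b \<in> stable_set_ideal d E" "homogeneous_deg 2 b"
    and m: "m0 \<in> Poly_Mapping.keys b" "m \<in> Poly_Mapping.keys b"
    and same_image: "pi_exponent m0 = pi_exponent m"
  shows "stable_exchange d E (w + m0) (w + m)"
proof -
  obtain A B where AB: "A \<in> Poly_Mapping.keys m0" "B \<in> Poly_Mapping.keys m0"
      "m0 = Poly_Mapping.single A 1 + Poly_Mapping.single B 1"
    using degree_two_monomial_eq_pair b(2) m(1) unfolding homogeneous_deg_def by blast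
  obtain C D where CD: "C \<in> Poly_Mapping.keys m" "D \<in> Poly_Mapping.keys m"
      "m = Poly_Mapping.single C 1 + Poly_Mapping.single D 1"
    using degree_two_monomial_eq_pair b(2) m(2) unfolding homogeneous_deg_def by blast
  have "in_RG d E b" using b(1) unfolding stable_set_ideal_def by simp
  then have stable: "stable_set d E A" "stable_set d E B" "stable_set d E C" "stable_set d E D"
    using m AB CD unfolding in_RG_def by auto
  have "pi_exponent_var A + pi_exponent_var B = pi_exponent_var C + pi_exponent_var D"
    using same_image unfolding AB(3) CD(3) pi_exponent_pair .
  then have "\<forall>v. of_bool (v \<in> A) + of_bool (v \<in> B) = (of_bool (v \<in> C) + of_bool (v \<in> D) :: nat)"
    using pi_exponent_var_pair_eq_iff[OF stable[THEN stable_set_finite]] by simp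
  then show ?thesis
    unfolding stable_exchange_def AB(3) CD(3) using stable
    by (intro exI[of _ w] exI[of _ A] exI[of _ B] exI[of _ C] exI[of _ D]) (simp add: add.assoc)
qed

lemma kempe_equiv_if_quad_ideal:
  assumes "sym E" and f: "coloring d E k f" and g: "coloring d E k g"
    and "Poly_Mapping.single (color_monomial d k f) 1 - Poly_Mapping.single (color_monomial d k g) 1
      \<in> (quad_ideal d E :: 'k::comm_ring_1 spoly set)"
  shows "kempe_equiv d E k f g"
proof -
  define K where "K = {M. (stable_exchange d E)\<^sup>*\<^sup>* (color_monomial d k f) M}"
  obtain F r where F: "finite F" "F \<subseteq> {p \<in> stable_set_ideal d E. homogeneous_deg 2 p}"
    and sum: "Poly_Mapping.single (color_monomial d k f) 1 - Poly_Mapping.single (color_monomial d k g) 1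
      = (\<Sum>b\<in>F. r b * b :: 'k spoly)"
    using assms(4) unfolding quad_ideal_def ideal_RG_def by blast
  have "coeff_sum K (r b * b) = 0" if "b \<in> F" for b
  proof (rule coeff_sum_mult_kernel_eq_zero)
    show "pi_map b = 0" using F that unfolding stable_set_ideal_def by auto
    show "w + m \<in> K" if "m0 \<in> Poly_Mapping.keys b" "m \<in> Poly_Mapping.keys b"
      "pi_exponent m0 = pi_exponent m" "w + m0 \<in> K" for w m0 m
      using stable_exchange_in_quadratic_kernel[of b d E m0 m w] F \<open>b \<in> F\<close> that
      unfolding K_def by (auto intro: rtranclp.rtrancl_into_rtrancl)
  qed
  then have "coeff_sum K (Poly_Mapping.single (color_monomial d k f) 1
      - Poly_Mapping.single (color_monomial d k g) (1::'k)) = 0"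
    unfolding sum coeff_sum_sum by simp
  moreover have "color_monomial d k f \<in> K" unfolding K_def by simp
  ultimately have "color_monomial d k g \<in> K"
    unfolding coeff_sum_diff coeff_sum_single by (auto simp: when_def split: if_splits)
  then obtain f' where f': "coloring d E k f'" "kempe_equiv d E k f f'"
    "color_monomial d k f' = color_monomial d k g"
    using stable_exchanges_by_kempe[OF \<open>sym E\<close> f] unfolding K_def by blast
  have "kempe_equiv d E k f' g"
    using kempe_equiv_if_same_color_monomial[OF \<open>sym E\<close> g f'(1,3)] .
  with f'(2) show ?thesis unfolding kempe_equiv_def by (rule rtranclp_trans)
qed

theorem proposition2p3:
  fixes d k :: nat and E :: "(nat \<times> nat) set" and f g :: "nat \<Rightarrow> nat"
  assumes "simple_graph_on d E" and "k \<ge> 1"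
    and "coloring d E k f" and "coloring d E k g"
  shows "kempe_equiv d E k f g \<longleftrightarrow>
         (xcol {1..d} k f - xcol {1..d} k g :: ('k::field) spoly) \<in> quad_ideal d E"
proof -
  have "sym E" using assms(1) unfolding simple_graph_on_def by blast
  then show ?thesis
    unfolding xcol_eq_single
    using quad_ideal_if_kempe_equiv kempe_equiv_if_quad_ideal assms(3,4) by blast
qed

end
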